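(* Let $W$ be an $\epsilon$-spectral cluster of $G_0$, let $V\subseteq V_0$ be closed in $G_0$ and dominate $W$, let $G=G_0|V$, and let $S\subseteq V$ be closed in $G$ with $\mathrm{vol}_{G_0}(W\setminus S)\le\frac23\mathrm{vol}_{G_0}(W)$. Perform the following "big expansion" of $S$ inside $G$: (1) a grab; (2) local improvements of $S$; (3) a grab; (4) local improvements of $S$. Here a grab replaces $S$ by $S\cup T$, where $T$ is the set of all $v\in V\setminus S$ with $d_G(v)>0$ having at least $\frac16 d_G(v)$ of their $G$-neighbors in $S$ (computed before the grab); local improvements of $S$ means: while there exists $v\in V\setminus S$ with $d_G(v)>0$ and at least $\frac59 d_G(v)$ of its $G$-neighbors in $S$, add $v$ to $S$. Then the resulting set $S$ dominates $W$.
   Context: Standing setting: $G_0=(V_0,E_0)$ is a finite simple undirected graph and $0<\epsilon\le 1/2000000$. For a graph $H$, $d_H(v)$ is the degree, $\mathrm{vol}_H(S)=\sum_{v\in S}d_H(v)$, $E(S,T)$ is the set of edges with one endpoint in $S$ and the other in $T$, $\partial_H S=E(S,V(H)\setminus S)$. For $V\subseteq V_0$, $G_0|V$ is the induced subgraph. An $\epsilon$-spectral cluster of $G_0$ is $W\subseteq V_0$ with $\mathrm{vol}_{G_0}(W)>0$, $|\partial_{G_0}W|\le\epsilon\,\mathrm{vol}_{G_0}(W)$, and for every $A\subseteq W$ with $r=\mathrm{vol}_{G_0}(A)/\mathrm{vol}_{G_0}(W)$, $|E(A,W\setminus A)|\ge(r(1-r)-\epsilon)\mathrm{vol}_{G_0}(W)$.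 A set $A\subseteq V(H)$ is closed in $H$ if no $v\in V(H)\setminus A$ with $d_H(v)>0$ has at least $\frac59 d_H(v)$ of its $H$-neighbors in $A$. A set $A\subseteq V_0$ dominates $W$ if $\mathrm{vol}_{G_0}(W\cap A)>(1-3\epsilon)\mathrm{vol}_{G_0}(W)$. *)

theory Defs
  imports Complex_Main
begin

definition simple_graph :: "'a set \<Rightarrow> ('a \<Rightarrow> 'a \<Rightarrow> bool) \<Rightarrow> bool" where
  "simple_graph V E \<longleftrightarrow> finite V \<and> (\<forall>u v. E u v \<longrightarrow> E v u)
     \<and> (\<forall>v. \<not> E v v) \<and> (\<forall>u v. E u v \<longrightarrow> u \<in> V \<and> v \<in> V)"

definition induced :: "('a \<Rightarrow> 'a \<Rightarrow> bool) \<Rightarrow> 'a set \<Rightarrow> 'a \<Rightarrow> 'a \<Rightarrow> bool" where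
  "induced E V = (\<lambda>u v. E u v \<and> u \<in> V \<and> v \<in> V)"

definition nbrs :: "'a set \<Rightarrow> ('a \<Rightarrow> 'a \<Rightarrow> bool) \<Rightarrow> 'a \<Rightarrow> 'a set" where
  "nbrs V E v = {u \<in> V. E v u}"

definition deg :: "'a set \<Rightarrow> ('a \<Rightarrow> 'a \<Rightarrow> bool) \<Rightarrow> 'a \<Rightarrow> nat" where
  "deg V E v = card (nbrs V E v)"

definition vol :: "'a set \<Rightarrow> ('a \<Rightarrow> 'a \<Rightarrow> bool) \<Rightarrow> 'a set \<Rightarrow> real" where
  "vol V E S = (\<Sum>v\<in>S. real (deg V E v))"

definition edges_between :: "('a \<Rightarrow> 'a \<Rightarrow> bool) \<Rightarrow> 'a set \<Rightarrow> 'a set \<Rightarrow> 'a set set" where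
  "edges_between E S T = {{u, v} | u v. u \<in> S \<and> v \<in> T \<and> E u v}"

definition spectral_cluster ::
  "'a set \<Rightarrow> ('a \<Rightarrow> 'a \<Rightarrow> bool) \<Rightarrow> real \<Rightarrow> 'a set \<Rightarrow> bool" where
  "spectral_cluster V0 E eps W \<longleftrightarrow> W \<subseteq> V0 \<and> vol V0 E W > 0
     \<and> real (card (edges_between E W (V0 - W))) \<le> eps * vol V0 E W
     \<and> (\<forall>A \<subseteq> W. let r = vol V0 E A / vol V0 E W in
          real (card (edges_between E A (W - A))) \<ge> (r * (1 - r) - eps) * vol V0 E W)"

definition closed_in :: "'a set \<Rightarrow> ('a \<Rightarrow> 'a \<Rightarrow> bool) \<Rightarrow> 'a set \<Rightarrow> bool" where
  "closed_in V E A \<longleftrightarrow> A \<subseteq> V \<and> (\<forall>v \<in> V - A. deg V E v > 0 \<longrightarrow>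
      \<not> (real (card (nbrs V E v \<inter> A)) \<ge> 5/9 * real (deg V E v)))"

definition dominates :: "'a set \<Rightarrow> ('a \<Rightarrow> 'a \<Rightarrow> bool) \<Rightarrow> real \<Rightarrow> 'a set \<Rightarrow> 'a set \<Rightarrow> bool" where
  "dominates V0 E eps A W \<longleftrightarrow> vol V0 E (W \<inter> A) > (1 - 3 * eps) * vol V0 E W"

definition grab :: "'a set \<Rightarrow> ('a \<Rightarrow> 'a \<Rightarrow> bool) \<Rightarrow> 'a set \<Rightarrow> 'a set" where
  "grab V E S = S \<union> {v \<in> V - S. deg V E v > 0 \<and>
      real (card (nbrs V E v \<inter> S)) \<ge> 1/6 * real (deg V E v)}"

definition improve_step :: "'a set \<Rightarrow> ('a \<Rightarrow> 'a \<Rightarrow> bool) \<Rightarrow> 'a set \<Rightarrow> 'a set \<Rightarrow> bool" where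
  "improve_step V E S S' \<longleftrightarrow> (\<exists>v \<in> V - S. deg V E v > 0 \<and>
      real (card (nbrs V E v \<inter> S)) \<ge> 5/9 * real (deg V E v) \<and> S' = insert v S)"

definition local_improvements :: "'a set \<Rightarrow> ('a \<Rightarrow> 'a \<Rightarrow> bool) \<Rightarrow> 'a set \<Rightarrow> 'a set \<Rightarrow> bool" where
  "local_improvements V E S S' \<longleftrightarrow> (improve_step V E)\<^sup>*\<^sup>* S S' \<and> \<not> (\<exists>S''. improve_step V E S' S'')"

end

theory Submission
  imports Defs
begin

text \<open>For any X inside W, the cluster property forces at least
  (x(1-x) - eps) vol W edges between W \<inter> X and W - X, where x = vol(W - X)/vol W,
  while a closed X receives at most 5/9 of the degree of each outside vertex.
  Hence for closed X the fraction x satisfies x(4/9 - x) \<le> eps, so x is either below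
  3 eps or above 4/9 - 3 eps. Starting from a closed S with x \<le> 2/3, the same count shows
  that the vertices of W \<inter> V missed by the first grab (each sending at most 1/6 of its
  degree into S) have volume at most 18/7 (4/27 + eps) vol W. The final set S4 is closed,
  contains the first grab, and misses only these vertices and W - V, so its x is below
  4/9 - 3 eps and therefore below 3 eps.\<close>

lemma vol_Int_Diff: "finite W \<Longrightarrow> vol V0 E W = vol V0 E (W \<inter> X) + vol V0 E (W - X)"
  unfolding vol_def by (rule sum.Int_Diff)

lemma vol_nonneg: "0 \<le> vol V0 E X"
  by (simp add: vol_def sum_nonneg)

lemma vol_le_of_subset_Un:
  assumes "finite A" "finite B" "X \<subseteq> A \<union> B"
  shows "vol V0 E X \<le> vol V0 E A + vol V0 E B"
proof -
  have "vol V0 E X \<le> vol V0 E (A \<union> B)"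
    unfolding vol_def using assms by (intro sum_mono2) auto
  also have "\<dots> + vol V0 E (A \<inter> B) = vol V0 E A + vol V0 E B"
    unfolding vol_def using assms by (intro sum.union_inter) auto
  finally show ?thesis
    using vol_nonneg[of V0 E "A \<inter> B"] by linarith
qed

lemma spectral_cluster_finite:
  "simple_graph V0 E \<Longrightarrow> spectral_cluster V0 E eps W \<Longrightarrow> finite W"
  unfolding simple_graph_def spectral_cluster_def by (meson finite_subset)

lemma dominates_iff_vol_Diff:
  "finite W \<Longrightarrow> dominates V0 E eps X W \<longleftrightarrow> vol V0 E (W - X) < 3 * eps * vol V0 E W"
  unfolding dominates_def by (simp add: vol_Int_Diff[of W V0 E X] algebra_simps)

lemma finite_nbrs: "simple_graph V0 E \<Longrightarrow> finite (nbrs V0 E v)"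
  by (simp add: simple_graph_def nbrs_def)

lemma nbrs_induced: "v \<in> V \<Longrightarrow> V \<subseteq> V0 \<Longrightarrow> nbrs V (induced E V) v = nbrs V0 E v \<inter> V"
  by (auto simp: nbrs_def induced_def)

lemma grab_superset: "S \<subseteq> grab V E S"
  by (auto simp: grab_def)

lemma grab_subset: "S \<subseteq> V \<Longrightarrow> grab V E S \<subseteq> V"
  by (auto simp: grab_def)

lemma induced_self: "simple_graph V0 E \<Longrightarrow> induced E V0 = E"
  by (auto simp: simple_graph_def induced_def fun_eq_iff)

lemma deg_induced_le:
  assumes "simple_graph V0 E" "V \<subseteq> V0" "v \<in> V"
  shows "deg V (induced E V) v \<le> deg V0 E v"
  unfolding deg_def nbrs_induced[OF assms(3,2)]
  using finite_nbrs[OF assms(1)] by (intro card_mono) auto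

text \<open>The G0-neighbours of v in A are G-neighbours in X, and deg_G v \<le> deg_G0 v.\<close>

lemma card_nbrs_le_of_induced:
  assumes graph: "simple_graph V0 E" and V: "V \<subseteq> V0" "v \<in> V"
    and "A \<subseteq> X" "X \<subseteq> V" "0 \<le> c"
    and frac: "deg V (induced E V) v > 0 \<Longrightarrow>
      real (card (nbrs V (induced E V) v \<inter> X)) \<le> c * real (deg V (induced E V) v)"
  shows "real (card (nbrs V0 E v \<inter> A)) \<le> c * real (deg V0 E v)"
proof -
  let ?N = "nbrs V (induced E V) v"
  have fin: "finite ?N"
    using finite_nbrs[OF graph] by (simp add: nbrs_induced[OF V(2,1)])
  have "card (nbrs V0 E v \<inter> A) \<le> card (?N \<inter> X)"
    using assms fin by (intro card_mono) (auto simp: nbrs_induced[OF V(2,1)])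
  moreover have "real (card (?N \<inter> X)) \<le> c * real (deg V (induced E V) v)"
  proof (cases "deg V (induced E V) v > 0")
    case False
    then have "?N = {}"
      using fin by (simp add: deg_def)
    then show ?thesis
      using \<open>0 \<le> c\<close> by simp
  qed (rule frac)
  moreover have "c * real (deg V (induced E V) v) \<le> c * real (deg V0 E v)"
    using deg_induced_le[OF graph V] \<open>0 \<le> c\<close> by (simp add: mult_left_mono)
  ultimately show ?thesis
    by linarith
qed

lemma card_nbrs_closed_le:
  assumes graph: "simple_graph V0 E" and "V \<subseteq> V0" and V_closed: "closed_in V0 E V"
    and X_closed: "closed_in V (induced E V) X" and "A \<subseteq> X" and v: "v \<in> V0 - X"
  shows "real (card (nbrs V0 E v \<inter> A)) \<le> 5/9 * real (deg V0 E v)"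
proof (cases "v \<in> V")
  case True
  show ?thesis
    using X_closed v True \<open>A \<subseteq> X\<close>
    by (intro card_nbrs_le_of_induced[OF graph \<open>V \<subseteq> V0\<close> True, of A X])
      (force simp: closed_in_def)+
next
  case False
  \<comment> \<open>G0 is its own induced subgraph on V0, in which V is closed.\<close>
  have "A \<subseteq> V"
    using X_closed \<open>A \<subseteq> X\<close> by (auto simp: closed_in_def)
  then show ?thesis
    using V_closed v False
    by (intro card_nbrs_le_of_induced[OF graph order_refl, of v A V])
      (force simp: closed_in_def induced_self[OF graph])+
qed

lemma card_nbrs_not_grabbed_le:
  assumes graph: "simple_graph V0 E" and "V \<subseteq> V0" "A \<subseteq> S" "S \<subseteq> V"
    and v: "v \<in> V - grab V (induced E V) S"
  shows "real (card (nbrs V0 E v \<inter> A)) \<le> 1/6 * real (deg V0 E v)"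
  using v grab_superset[of S V "induced E V"] assms(3,4)
  by (intro card_nbrs_le_of_induced[OF graph \<open>V \<subseteq> V0\<close>, of v A S])
    (auto simp: grab_def)

lemma rtranclp_improve_step_mono:
  assumes "(improve_step V E)\<^sup>*\<^sup>* S S'"
  shows "S \<subseteq> S'" and "S \<subseteq> V \<Longrightarrow> S' \<subseteq> V"
  using assms by (induction rule: rtranclp_induct) (auto simp: improve_step_def)

lemma local_improvements_closed_in:
  assumes "local_improvements V E S S'" and "S' \<subseteq> V"
  shows "closed_in V E S'"
  unfolding closed_in_def
proof (intro conjI assms(2) ballI impI notI)
  fix v assume "v \<in> V - S'" "0 < deg V E v"
    "5/9 * real (deg V E v) \<le> real (card (nbrs V E v \<inter> S'))"
  then have "improve_step V E S' (insert v S')"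
    unfolding improve_step_def by blast
  with assms(1) show False
    unfolding local_improvements_def by blast
qed

text \<open>Each edge of E(A, D) is counted at its endpoint in D.\<close>

lemma card_edges_between_le_sum_nbrs:
  assumes graph: "simple_graph V0 E" and "finite D"
  shows "real (card (edges_between E A D)) \<le> (\<Sum>v\<in>D. real (card (nbrs V0 E v \<inter> A)))"
proof -
  let ?P = "SIGMA v:D. nbrs V0 E v \<inter> A"
  have "finite V0"
    using graph by (simp add: simple_graph_def)
  have fin: "finite ?P"
    using \<open>finite D\<close> \<open>finite V0\<close> by (auto simp: nbrs_def)
  have "edges_between E A D \<subseteq> (\<lambda>(v, u). {u, v}) ` ?P"
  proof
    fix e assume "e \<in> edges_between E A D"
    then obtain u v where "e = {u, v}" "u \<in> A" "v \<in> D" "E u v"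
      by (auto simp: edges_between_def)
    moreover have "E v u" "u \<in> V0"
      using graph \<open>E u v\<close> by (auto simp: simple_graph_def)
    ultimately show "e \<in> (\<lambda>(v, u). {u, v}) ` ?P"
      by (auto simp: nbrs_def image_iff intro!: bexI[of _ "(v, u)"])
  qed
  then have "card (edges_between E A D) \<le> card ((\<lambda>(v, u). {u, v}) ` ?P)"
    by (rule card_mono[OF finite_imageI[OF fin]])
  also have "\<dots> \<le> card ?P"
    by (rule card_image_le[OF fin])
  also have "\<dots> = (\<Sum>v\<in>D. card (nbrs V0 E v \<inter> A))"
    using \<open>finite D\<close> \<open>finite V0\<close> by (subst card_SigmaI) (auto simp: nbrs_def)
  finally show ?thesis
    by (metis of_nat_le_iff of_nat_sum)
qed

lemma spectral_cluster_cut_bound: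
  assumes graph: "simple_graph V0 E" and cluster: "spectral_cluster V0 E eps W"
    and bound: "\<And>v. v \<in> W - X \<Longrightarrow> real (card (nbrs V0 E v \<inter> (W \<inter> X))) \<le> f v"
    and x: "x = vol V0 E (W - X) / vol V0 E W"
  shows "((1 - x) * x - eps) * vol V0 E W \<le> sum f (W - X)"
proof -
  have fW: "finite W" and pos: "vol V0 E W > 0"
    using spectral_cluster_finite[OF graph cluster] cluster
    by (auto simp: spectral_cluster_def)
  have r: "vol V0 E (W \<inter> X) / vol V0 E W = 1 - x"
    using pos vol_Int_Diff[OF fW, of V0 E X] x by (simp add: field_simps)
  have "(vol V0 E (W \<inter> X) / vol V0 E W * (1 - vol V0 E (W \<inter> X) / vol V0 E W) - eps)
      * vol V0 E W \<le> real (card (edges_between E (W \<inter> X) (W - W \<inter> X)))"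
    using cluster unfolding spectral_cluster_def Let_def by blast
  then have "((1 - x) * x - eps) * vol V0 E W
      \<le> real (card (edges_between E (W \<inter> X) (W - W \<inter> X)))"
    unfolding r by (simp add: mult.commute)
  also have "W - W \<inter> X = W - X"
    by blast
  also have "real (card (edges_between E (W \<inter> X) (W - X)))
      \<le> (\<Sum>v\<in>W - X. real (card (nbrs V0 E v \<inter> (W \<inter> X))))"
    using fW by (intro card_edges_between_le_sum_nbrs[OF graph]) simp
  also have "\<dots> \<le> sum f (W - X)"
    by (rule sum_mono) (rule bound)
  finally show ?thesis .
qed

lemma ungrabbed_fraction_bound:
  fixes x b e :: real
  assumes "0 \<le> x" "x \<le> 2/3" "(1 - x) * x - e \<le> 5/9 * x - 7/18 * b"
  shows "b \<le> 18/7 * (4/27 + e)"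
proof -
  have "(x - 2/3) * (x + 2/9) \<le> 0"
    using assms by (intro mult_nonpos_nonneg) auto
  also have "(x - 2/3) * (x + 2/9) = x * x - 4/9 * x - 4/27"
    by algebra
  finally have "x * x - 4/9 * x \<le> 4/27"
    by simp
  moreover have "x - x * x - e \<le> 5/9 * x - 7/18 * b"
    using assms(3) by (simp add: algebra_simps)
  ultimately show ?thesis
    by simp
qed

lemma closed_fraction_gap:
  fixes x e :: real
  assumes "0 < e" "e < 1/27" "x \<le> 4/9 - 3 * e" "(1 - x) * x - e \<le> 5/9 * x"
  shows "x < 3 * e"
proof (rule ccontr)
  assume "\<not> x < 3 * e"
  then have "0 \<le> (x - 3 * e) * ((4/9 - 3 * e) - x)"
    using assms(3) by (intro mult_nonneg_nonneg) auto
  also have "\<dots> = 4/9 * x - x * x - 4/3 * e + 9 * (e * e)"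
    by algebra
  finally have "0 \<le> 4/9 * x - x * x - 4/3 * e + 9 * (e * e)" .
  moreover have "x - x * x - e \<le> 5/9 * x"
    using assms(4) by (simp add: algebra_simps)
  moreover have "e * e < e * (1/27)"
    using assms(1,2) by (intro mult_strict_left_mono)
  ultimately show False
    by simp
qed

lemma vol_not_grabbed_le:
  assumes graph: "simple_graph V0 E" and cluster: "spectral_cluster V0 E eps W"
    and V_sub: "V \<subseteq> V0" and V_closed: "closed_in V0 E V"
    and S_closed: "closed_in V (induced E V) S"
    and S_vol: "vol V0 E (W - S) \<le> 2/3 * vol V0 E W"
  shows "vol V0 E (W \<inter> V - grab V (induced E V) S) \<le> 18/7 * (4/27 + eps) * vol V0 E W"
proof -
  define B where "B = W \<inter> V - grab V (induced E V) S"
  define w where "w = vol V0 E W"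
  define x where "x = vol V0 E (W - S) / w"
  define b where "b = vol V0 E B / w"
  have fW: "finite W" and W_sub: "W \<subseteq> V0" and w_pos: "0 < w"
    using spectral_cluster_finite[OF graph cluster] cluster
    by (auto simp: spectral_cluster_def w_def)
  have S_sub: "S \<subseteq> V"
    using S_closed by (simp add: closed_in_def)
  have B_sub: "B \<subseteq> W - S"
    using grab_superset[of S V "induced E V"] by (auto simp: B_def)
  \<comment> \<open>5/9 - 7/18 = 1/6 is the grab threshold.\<close>
  let ?f = "\<lambda>v. 5/9 * real (deg V0 E v) - (if v \<in> B then 7/18 * real (deg V0 E v) else 0)"
  have bound: "real (card (nbrs V0 E v \<inter> (W \<inter> S))) \<le> ?f v" if "v \<in> W - S" for v
  proof (cases "v \<in> B")
    case True
    then show ?thesis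
      using card_nbrs_not_grabbed_le[OF graph V_sub _ S_sub, of "W \<inter> S" v]
      by (simp add: B_def)
  next
    case False
    then show ?thesis
      using card_nbrs_closed_le[OF graph V_sub V_closed S_closed, of "W \<inter> S" v] that W_sub
      by auto
  qed
  have "((1 - x) * x - eps) * w \<le> sum ?f (W - S)"
    unfolding w_def by (rule spectral_cluster_cut_bound[OF graph cluster bound x_def[unfolded w_def]])
  also have "sum ?f (W - S) = 5/9 * vol V0 E (W - S) - 7/18 * vol V0 E B"
  proof -
    have "(\<Sum>v\<in>W - S. if v \<in> B then 7/18 * real (deg V0 E v) else 0) = 7/18 * vol V0 E B"
      using fW B_sub
      by (simp add: sum.inter_restrict[symmetric] Int_absorb1 vol_def sum_distrib_left)
    then show ?thesis
      by (simp add: vol_def sum_subtractf sum_distrib_left)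
  qed
  also have "\<dots> = (5/9 * x - 7/18 * b) * w"
    using w_pos by (simp add: x_def b_def algebra_simps)
  finally have "(1 - x) * x - eps \<le> 5/9 * x - 7/18 * b"
    using w_pos by (rule mult_right_le_imp_le)
  moreover have "0 \<le> x" "x \<le> 2/3"
    using w_pos S_vol vol_nonneg[of V0 E "W - S"] by (simp_all add: x_def w_def field_simps)
  ultimately have "b \<le> 18/7 * (4/27 + eps)"
    by (intro ungrabbed_fraction_bound)
  then show ?thesis
    using w_pos by (simp add: b_def B_def w_def field_simps)
qed

lemma closed_in_dominates:
  assumes graph: "simple_graph V0 E" and cluster: "spectral_cluster V0 E eps W"
    and eps: "0 < eps" "eps < 1/27"
    and V_sub: "V \<subseteq> V0" and V_closed: "closed_in V0 E V"
    and X_closed: "closed_in V (induced E V) X"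
    and X_vol: "vol V0 E (W - X) \<le> (4/9 - 3 * eps) * vol V0 E W"
  shows "dominates V0 E eps X W"
proof -
  define w where "w = vol V0 E W"
  define x where "x = vol V0 E (W - X) / w"
  have fW: "finite W" and W_sub: "W \<subseteq> V0" and w_pos: "0 < w"
    using spectral_cluster_finite[OF graph cluster] cluster
    by (auto simp: spectral_cluster_def w_def)
  have bound: "real (card (nbrs V0 E v \<inter> (W \<inter> X))) \<le> 5/9 * real (deg V0 E v)"
    if "v \<in> W - X" for v
    using card_nbrs_closed_le[OF graph V_sub V_closed X_closed, of "W \<inter> X" v] that W_sub
    by auto
  have "((1 - x) * x - eps) * w \<le> (\<Sum>v\<in>W - X. 5/9 * real (deg V0 E v))"
    unfolding w_def by (rule spectral_cluster_cut_bound[OF graph cluster bound x_def[unfolded w_def]])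
  also have "\<dots> = 5/9 * x * w"
    using w_pos by (simp add: x_def vol_def sum_distrib_left)
  finally have "(1 - x) * x - eps \<le> 5/9 * x"
    using w_pos by simp
  moreover have "x \<le> 4/9 - 3 * eps"
    using w_pos X_vol by (simp add: x_def w_def field_simps)
  ultimately have "x < 3 * eps"
    using eps by (intro closed_fraction_gap)
  then show ?thesis
    using w_pos fW by (simp add: dominates_iff_vol_Diff x_def w_def field_simps)
qed

theorem mainTheorem9:
  fixes V0 V W S S1 S2 S3 S4 :: "'a set" and E :: "'a \<Rightarrow> 'a \<Rightarrow> bool" and eps :: real
  assumes graph: "simple_graph V0 E"
    and eps: "0 < eps" "eps \<le> 1 / 2000000"
    and cluster: "spectral_cluster V0 E eps W"
    and V_sub: "V \<subseteq> V0"
    and V_closed: "closed_in V0 E V"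
    and V_dom: "dominates V0 E eps V W"
    and S_closed: "closed_in V (induced E V) S"
    and S_vol: "vol V0 E (W - S) \<le> 2/3 * vol V0 E W"
    and step1: "S1 = grab V (induced E V) S"
    and step2: "local_improvements V (induced E V) S1 S2"
    and step3: "S3 = grab V (induced E V) S2"
    and step4: "local_improvements V (induced E V) S3 S4"
  shows "dominates V0 E eps S4 W"
proof -
  have fW: "finite W" and w_pos: "0 < vol V0 E W"
    using spectral_cluster_finite[OF graph cluster] cluster by (auto simp: spectral_cluster_def)
  have "S \<subseteq> V"
    using S_closed by (simp add: closed_in_def)
  then have "S1 \<subseteq> V"
    using step1 grab_subset by simp
  then have "S1 \<subseteq> S2" "S2 \<subseteq> V"
    using step2 rtranclp_improve_step_mono[of V "induced E V" S1 S2]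
    unfolding local_improvements_def by auto
  then have "S2 \<subseteq> S3" "S3 \<subseteq> V"
    using step3 grab_superset[of S2] grab_subset[of S2] by auto
  then have "S3 \<subseteq> S4" "S4 \<subseteq> V"
    using step4 rtranclp_improve_step_mono[of V "induced E V" S3 S4]
    unfolding local_improvements_def by auto
  have "S1 \<subseteq> S4"
    using \<open>S1 \<subseteq> S2\<close> \<open>S2 \<subseteq> S3\<close> \<open>S3 \<subseteq> S4\<close> by blast
  have "vol V0 E (W - S4) \<le> vol V0 E (W \<inter> V - S1) + vol V0 E (W - V)"
    using fW \<open>S1 \<subseteq> S4\<close> by (intro vol_le_of_subset_Un) auto
  also have "\<dots> \<le> (18/7 * (4/27 + eps) + 3 * eps) * vol V0 E W"
    using vol_not_grabbed_le[OF graph cluster V_sub V_closed S_closed S_vol] step1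
      V_dom fW by (simp add: dominates_iff_vol_Diff algebra_simps)
  also have "\<dots> \<le> (4/9 - 3 * eps) * vol V0 E W"
    using eps w_pos unfolding distrib_left by (intro mult_right_mono) linarith+
  finally show ?thesis
    using eps by (intro closed_in_dominates[OF graph cluster _ _ V_sub V_closed
        local_improvements_closed_in[OF step4 \<open>S4 \<subseteq> V\<close>]]) auto
qed

end
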